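(* $\mathbf S(\mathbf{pAND}\cup\mathbf{11tAND}\cup\mathbf{11pOR}\cup\mathbf{tOR})\supsetneq\mathbf S(\mathbf{pAND}\cup\mathbf{11tAND}\cup\mathbf{tOR})$; in particular, there is a one-input one-output pOR net that does not belong to $\mathbf S(\mathbf{pAND}\cup\mathbf{11tAND}\cup\mathbf{tOR})$.
   Context: Petri nets: $(P,T,F)$ with finite disjoint places $P$, transitions $T$, flow edges $F\subseteq(P\times T)\cup(T\times P)$; $\bullet x=\{y\mid(y,x)\in F\}$, $x\bullet=\{y\mid(x,y)\in F\}$. Workflow nets. A pWF net is $(P,T,F,I,O)$ with $(P,T,F)$ a Petri net, $I,O\subseteq P$ non-empty, every node reachable by a directed path from some node of $I$, and some node of $O$ reachable from every node. A tWF net is the same with $I,O$ non-empty subsets of $T$. Input nodes may have incoming edges and output nodes outgoing edges. A WF net is a pWF or tWF net; it is one-input (one-output) if $|I|=1$ ($|O|=1$). Substitution. Let $N=(P,T,F,I,O)$ and $M=(P',T',F',I',O')$ be WF nets with disjoint node sets. If $p\in P$ and $M$ is a pWF net, $N\otimes_p M$ is obtained from $N$ by deleting $p$ and all edges incident to $p$, adding all nodes and edges of $M$, adding an edge $(t,p')$ for each $t\in\bullet_N p$ and each $p'\in I'$, and an edge $(p',t)$ for each $p'\in O'$ and each $t\in p\bullet_N$; its input set is $(I\setminus\{p\})\cup I'$ if $p\in I$ and $I$ otherwise, and its output set is $(O\setminus\{p\})\cup O'$ if $p\in O$ and $O$ otherwise. If $t\in T$ and $M$ is a tWF net, $N\otimes_t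 M$ is defined analogously: delete $t$ and its edges, add $M$, add $(q,t')$ for each $q\in\bullet_N t$, $t'\in I'$, and $(t',q)$ for each $t'\in O'$, $q\in t\bullet_N$, with input/output sets updated in the same way. The substitution closure $\mathbf S(C)$ of a class $C$ of WF nets is the smallest superclass of $C$ such that whenever $N,M\in\mathbf S(C)$ are disjoint, $N\otimes_p M\in\mathbf S(C)$ for every place $p$ of $N$ if $M$ is a pWF net, and $N\otimes_t M\in\mathbf S(C)$ for every transition $t$ of $N$ if $M$ is a tWF net. AND and OR nets. An AND net is an acyclic WF net $(P,T,F,I,O)$ such that for every place $p$: (1) either $p\in I$ and $|\bullet p|=0$, or $p\notin I$ and $|\bullet p|=1$; and (2) either $p\in O$ and $|p\bullet|=0$, or $p\notin O$ and $|p\bullet|=1$. An OR net is a (possibly cyclic) WF net such that for every transition $t$: (1) either $t\in I$ and $|\bullet t|=0$, or $t\notin I$ and $|\bullet t|=1$; and (2) either $t\in O$ and $|t\bullet|=0$, or $t\notin O$ and $|t\bullet|=1$. A pAND (tAND, pOR, tOR) net is an AND (AND, OR, OR) net that is a pWF (tWF, pWF, tWF) net. $\mathbf{pAND}$ is the class of pAND nets, $\mathbf{11tAND}$ the class of one-input one-output tAND nets, $\mathbf{11pOR}$ the class of one-input one-output pOR nets, and $\mathbf{tOR}$ the class of tOR nets. *)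

theory Defs
  imports Main
begin

record 'a net =
  pl  :: "'a set"
  tr  :: "'a set"
  fl  :: "('a \<times> 'a) set"
  inp :: "'a set"
  outp :: "'a set"

definition nodes :: "('a, 'b) net_scheme \<Rightarrow> 'a set" where
  "nodes N = pl N \<union> tr N"

definition pre :: "('a, 'b) net_scheme \<Rightarrow> 'a \<Rightarrow> 'a set" where
  "pre N x = {y. (y, x) \<in> fl N}"

definition post :: "('a, 'b) net_scheme \<Rightarrow> 'a \<Rightarrow> 'a set" where
  "post N x = {y. (x, y) \<in> fl N}"

definition petri_net :: "'a net \<Rightarrow> bool" where
  "petri_net N \<longleftrightarrow> finite (pl N) \<and> finite (tr N) \<and> pl N \<inter> tr N = {} \<and>
     fl N \<subseteq> (pl N \<times> tr N) \<union> (tr N \<times> pl N)"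

definition wf_conn :: "'a net \<Rightarrow> bool" where
  "wf_conn N \<longleftrightarrow> (\<forall>x\<in>nodes N. \<exists>i\<in>inp N. (i, x) \<in> (fl N)\<^sup>*) \<and>
                 (\<forall>x\<in>nodes N. \<exists>q\<in>outp N. (x, q) \<in> (fl N)\<^sup>*)"

definition pWF :: "'a net \<Rightarrow> bool" where
  "pWF N \<longleftrightarrow> petri_net N \<and> inp N \<subseteq> pl N \<and> outp N \<subseteq> pl N \<and>
     inp N \<noteq> {} \<and> outp N \<noteq> {} \<and> wf_conn N"

definition tWF :: "'a net \<Rightarrow> bool" where
  "tWF N \<longleftrightarrow> petri_net N \<and> inp N \<subseteq> tr N \<and> outp N \<subseteq> tr N \<and>
     inp N \<noteq> {} \<and> outp N \<noteq> {} \<and> wf_conn N"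

definition WF :: "'a net \<Rightarrow> bool" where
  "WF N \<longleftrightarrow> pWF N \<or> tWF N"

definition one_one :: "'a net \<Rightarrow> bool" where
  "one_one N \<longleftrightarrow> card (inp N) = 1 \<and> card (outp N) = 1"

definition subst :: "'a net \<Rightarrow> 'a \<Rightarrow> 'a net \<Rightarrow> 'a net" where
  "subst N x M =
    \<lparr> pl = (pl N - {x}) \<union> pl M,
      tr = (tr N - {x}) \<union> tr M,
      fl = {e \<in> fl N. fst e \<noteq> x \<and> snd e \<noteq> x} \<union> fl M
           \<union> {(y, z). y \<in> pre N x \<and> z \<in> inp M}
           \<union> {(z, y). z \<in> outp M \<and> y \<in> post N x},
      inp = (if x \<in> inp N then (inp N - {x}) \<union> inp M else inp N),
      outp = (if x \<in> outp N then (outp N - {x}) \<union> outp M else outp N) \<rparr>"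

inductive_set Scl :: "'a net set \<Rightarrow> 'a net set" for C :: "'a net set" where
  base: "N \<in> C \<Longrightarrow> N \<in> Scl C"
| subst_pl: "\<lbrakk> N \<in> Scl C; M \<in> Scl C; nodes N \<inter> nodes M = {}; pWF M; p \<in> pl N \<rbrakk>
             \<Longrightarrow> subst N p M \<in> Scl C"
| subst_tr: "\<lbrakk> N \<in> Scl C; M \<in> Scl C; nodes N \<inter> nodes M = {}; tWF M; t \<in> tr N \<rbrakk>
             \<Longrightarrow> subst N t M \<in> Scl C"

definition AND_net :: "'a net \<Rightarrow> bool" where
  "AND_net N \<longleftrightarrow> WF N \<and> acyclic (fl N) \<and>
     (\<forall>p\<in>pl N. ((p \<in> inp N \<and> card (pre N p) = 0) \<or> (p \<notin> inp N \<and> card (pre N p) = 1)) \<and>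
               ((p \<in> outp N \<and> card (post N p) = 0) \<or> (p \<notin> outp N \<and> card (post N p) = 1)))"

definition OR_net :: "'a net \<Rightarrow> bool" where
  "OR_net N \<longleftrightarrow> WF N \<and>
     (\<forall>t\<in>tr N. ((t \<in> inp N \<and> card (pre N t) = 0) \<or> (t \<notin> inp N \<and> card (pre N t) = 1)) \<and>
               ((t \<in> outp N \<and> card (post N t) = 0) \<or> (t \<notin> outp N \<and> card (post N t) = 1)))"

definition pAND :: "'a net set" where
  "pAND = {N. AND_net N \<and> pWF N}"

definition tAND11 :: "'a net set" where
  "tAND11 = {N. AND_net N \<and> tWF N \<and> one_one N}"

definition pOR11 :: "'a net set" where
  "pOR11 = {N. OR_net N \<and> pWF N \<and> one_one N}"

definition tOR :: "'a net set" where
  "tOR = {N. OR_net N \<and> tWF N}"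

end

theory Submission
  imports Defs
begin

(* Every net of the closure S(pAND \<union> 11tAND \<union> tOR) has the property
   that no input place has an incoming edge ("its input places are sources"):
   a pAND net has empty presets on its input places, and a tWF net has no input
   places at all.  The property survives substitution, provided the nets involved
   are bipartite graphs whose input nodes are nodes of the net -- an auxiliary
   invariant that is itself preserved.  The one-input one-output pOR net consisting
   of a single place p that is both input and output, together with a transition t
   and the loop p \<rightarrow> t \<rightarrow> p, violates the property, so it lies outside the smaller
   closure.  Since the closure operator is monotone, strict inclusion follows. *)

lemma Scl_mono: "C \<subseteq> D \<Longrightarrow> Scl C \<subseteq> Scl D"
proof
  fix N assume CD: "C \<subseteq> D" and "N \<in> Scl C"
  from \<open>N \<in> Scl C\<close> show "N \<in> Scl D"
    by (induction rule: Scl.induct) (use CD in \<open>auto intro: Scl.intros\<close>)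
qed

definition kind_correct :: "'a net \<Rightarrow> 'a \<Rightarrow> 'a net \<Rightarrow> bool" where
  "kind_correct A x M \<longleftrightarrow>
     (x \<in> pl A \<and> inp M \<subseteq> pl M \<and> outp M \<subseteq> pl M) \<or>
     (x \<in> tr A \<and> inp M \<subseteq> tr M \<and> outp M \<subseteq> tr M)"

lemma Scl_invariant:
  assumes N: "N \<in> Scl C"
    and base_case: "\<And>N. N \<in> C \<Longrightarrow> P N"
    and step_case: "\<And>A M x. P A \<Longrightarrow> P M \<Longrightarrow> nodes A \<inter> nodes M = {} \<Longrightarrow>
                 kind_correct A x M \<Longrightarrow> P (subst A x M)"
  shows "P N"
  using N
proof (induction rule: Scl.induct)
  case (base N) then show ?case by (rule base_case)
next
  case (subst_pl N M p) then show ?case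
    by (intro step_case) (auto simp: kind_correct_def pWF_def)
next
  case (subst_tr N M t) then show ?case
    by (intro step_case) (auto simp: kind_correct_def tWF_def)
qed

definition bipartite :: "'a net \<Rightarrow> bool" where
  "bipartite N \<longleftrightarrow> pl N \<inter> tr N = {} \<and> fl N \<subseteq> pl N \<times> tr N \<union> tr N \<times> pl N \<and>
     inp N \<subseteq> nodes N"

definition source_inputs :: "'a net \<Rightarrow> bool" where
  "source_inputs N \<longleftrightarrow> (\<forall>p\<in>inp N \<inter> pl N. \<forall>y. (y, p) \<notin> fl N)"

lemma bipartite_edges: "bipartite N \<Longrightarrow> fl N \<subseteq> nodes N \<times> nodes N"
  unfolding bipartite_def nodes_def by auto

lemma bipartite_subst:
  assumes "bipartite A" and "bipartite M" and "nodes A \<inter> nodes M = {}"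
    and "kind_correct A x M"
  shows "bipartite (subst A x M)"
proof -
  let ?R = "subst A x M"
  have disj: "pl ?R \<inter> tr ?R = {}"
    using assms unfolding bipartite_def subst_def nodes_def by auto
  have edges: "fl ?R \<subseteq> pl ?R \<times> tr ?R \<union> tr ?R \<times> pl ?R"
  proof
    fix e assume e: "e \<in> fl ?R"
    obtain a b where ab: "e = (a, b)" by (cases e)
    show "e \<in> pl ?R \<times> tr ?R \<union> tr ?R \<times> pl ?R"
      using e assms
      unfolding bipartite_def kind_correct_def subst_def ab pre_def post_def by auto
  qed
  have "inp ?R \<subseteq> nodes ?R"
    using assms unfolding bipartite_def subst_def nodes_def by auto
  with disj edges show ?thesis unfolding bipartite_def by blast
qed

text \<open>An input place of the result is either an
  old input place of A (edges into it could only come from A, which has none) or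
  an input place of M, reachable only from the preset of x; the latter case needs
  x to be an input place of A, which has an empty preset.\<close>
lemma source_inputs_subst:
  assumes bA: "bipartite A" and bM: "bipartite M" and dis: "nodes A \<inter> nodes M = {}"
    and kind: "kind_correct A x M"
    and sA: "source_inputs A" and sM: "source_inputs M"
  shows "source_inputs (subst A x M)"
  unfolding source_inputs_def
proof (intro ballI allI notI)
  let ?R = "subst A x M"
  fix p y assume p: "p \<in> inp ?R \<inter> pl ?R" and e: "(y, p) \<in> fl ?R"
  have flA: "fl A \<subseteq> nodes A \<times> nodes A" and flM: "fl M \<subseteq> nodes M \<times> nodes M"
    using bA bM by (simp_all add: bipartite_edges)
  have inpA: "inp A \<subseteq> nodes A" and inpM: "inp M \<subseteq> nodes M"
    using bA bM unfolding bipartite_def by auto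
  show False
  proof (cases "p \<in> inp A \<and> p \<noteq> x")
    case True
    then have pnM: "p \<notin> nodes M" using inpA dis by auto
    then have "p \<in> pl A" using p unfolding subst_def nodes_def by auto
    then show False
      using e True sA pnM flM inpM unfolding source_inputs_def subst_def post_def by auto
  next
    case False
    then have pM: "p \<in> inp M" and xA: "x \<in> inp A"
      using p unfolding subst_def by (auto split: if_splits)
    then have pnA: "p \<notin> nodes A" using inpM dis by auto
    have plM: "p \<in> pl M" using p pnA unfolding subst_def nodes_def by auto
    have "(y, p) \<in> fl M \<or> (y, x) \<in> fl A"
      using e pnA flA unfolding subst_def pre_def post_def by auto
    moreover have "x \<in> pl A"
      using kind plM pM bM unfolding kind_correct_def bipartite_def by auto
    ultimately show False
      using sA sM pM plM xA unfolding source_inputs_def by auto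
  qed
qed

lemma finite_pre: "petri_net N \<Longrightarrow> finite (pre N p)"
  unfolding petri_net_def pre_def
  by (rule finite_subset[of _ "pl N \<union> tr N"]) auto

lemma WF_bipartite: "WF N \<Longrightarrow> bipartite N"
  unfolding WF_def pWF_def tWF_def petri_net_def bipartite_def nodes_def by auto

lemma AND_source_inputs: "AND_net N \<Longrightarrow> source_inputs N"
  unfolding source_inputs_def
proof (intro ballI allI notI)
  fix p y assume N: "AND_net N" and p: "p \<in> inp N \<inter> pl N" and e: "(y, p) \<in> fl N"
  have "card (pre N p) = 0" using N p unfolding AND_net_def by auto
  moreover have "petri_net N" using N unfolding AND_net_def WF_def pWF_def tWF_def by auto
  ultimately have "pre N p = {}" using finite_pre[of N p] by simp
  with e show False unfolding pre_def by auto
qed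

text \<open>A tWF net has no input places, so it trivially has source inputs.\<close>
lemma tWF_source_inputs: "tWF N \<Longrightarrow> source_inputs N"
  unfolding tWF_def petri_net_def source_inputs_def by auto

lemma base_class_invariants:
  assumes "N \<in> pAND \<union> tAND11 \<union> tOR"
  shows "bipartite N \<and> source_inputs N"
proof -
  consider "AND_net N" | "tWF N"
    using assms unfolding pAND_def tAND11_def tOR_def by blast
  then have "source_inputs N"
    by cases (simp_all add: AND_source_inputs tWF_source_inputs)
  moreover have "WF N"
    using assms unfolding pAND_def tAND11_def tOR_def by (auto simp: WF_def)
  ultimately show ?thesis by (simp add: WF_bipartite)
qed

lemma Scl_source_inputs:
  assumes "N \<in> Scl (pAND \<union> tAND11 \<union> tOR)"
  shows "source_inputs N"
proof -
  have "bipartite N \<and> source_inputs N"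
  proof (rule Scl_invariant[where P = "\<lambda>N. bipartite N \<and> source_inputs N", OF assms])
    fix A M :: "'a net" and x
    assume "bipartite A \<and> source_inputs A" and "bipartite M \<and> source_inputs M"
      and "nodes A \<inter> nodes M = {}" and "kind_correct A x M"
    then show "bipartite (subst A x M) \<and> source_inputs (subst A x M)"
      by (simp add: bipartite_subst source_inputs_subst)
  qed (rule base_class_invariants)
  then show ?thesis ..
qed

definition loop_net :: "'a \<Rightarrow> 'a \<Rightarrow> 'a net" where
  "loop_net p t = \<lparr> pl = {p}, tr = {t}, fl = {(p, t), (t, p)}, inp = {p}, outp = {p} \<rparr>"

lemma loop_net_pOR11:
  assumes "p \<noteq> t"
  shows "loop_net p t \<in> pOR11"
proof -
  have "pre (loop_net p t) t = {p}" and "post (loop_net p t) t = {p}"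
    using assms unfolding pre_def post_def loop_net_def by auto
  moreover have "pWF (loop_net p t)"
    using assms unfolding pWF_def petri_net_def wf_conn_def loop_net_def nodes_def
    by auto
  ultimately show ?thesis
    using assms unfolding pOR11_def OR_net_def WF_def one_one_def
    by (auto simp: loop_net_def)
qed

lemma loop_net_not_source_inputs: "\<not> source_inputs (loop_net p t)"
  unfolding source_inputs_def loop_net_def by auto

theorem mainTheorem3:
  shows "Scl (pAND \<union> tAND11 \<union> tOR) \<subset> Scl (pAND \<union> tAND11 \<union> pOR11 \<union> (tOR :: nat net set))
       \<and> (\<exists>N \<in> (pOR11 :: nat net set). N \<notin> Scl (pAND \<union> tAND11 \<union> tOR))"
proof -
  let ?L = "loop_net (0::nat) 1"
  have sub: "Scl (pAND \<union> tAND11 \<union> tOR) \<subseteq> Scl (pAND \<union> tAND11 \<union> pOR11 \<union> (tOR :: nat net set))"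
    by (rule Scl_mono) auto
  have L_pOR: "?L \<in> pOR11" by (rule loop_net_pOR11) simp
  then have L_in: "?L \<in> Scl (pAND \<union> tAND11 \<union> pOR11 \<union> tOR)" by (auto intro: Scl.base)
  have L_out: "?L \<notin> Scl (pAND \<union> tAND11 \<union> tOR)"
    using Scl_source_inputs[of ?L] loop_net_not_source_inputs[of 0 1] by blast
  from sub L_in L_out have "Scl (pAND \<union> tAND11 \<union> tOR) \<subset> Scl (pAND \<union> tAND11 \<union> pOR11 \<union> (tOR :: nat net set))"
    by blast
  with L_pOR L_out show ?thesis by blast
qed

end
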